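(* There is no Abel universal function with Hadamard gaps; that is, no $f\in\mathcal{U}_A(\mathbb{D})$ has Hadamard gaps.
   Context: $\mathbb{D}$ is the open unit disc, $\mathbb{T}$ the unit circle. $\mathcal{U}_A(\mathbb{D})$ (the Abel universal functions) is the set of $f\in H(\mathbb{D})$ such that for every $\varepsilon>0$, every compact $K\subset\mathbb{T}$ with $K\ne\mathbb{T}$ and every continuous $\varphi$ on $K$, there is $r\in[0,1)$ with $\sup_{\zeta\in K}|f(r\zeta)-\varphi(\zeta)|\le\varepsilon$. A power series $f(z)=\sum_k a_kz^k$ with radius of convergence $1$ has Hadamard gaps if there is a sequence $(n_k)$ in $\mathbb{N}$ with $\inf_k n_{k+1}/n_k>1$ such that $a_j=0$ whenever $j\notin\{n_k:k\in\mathbb{N}\}$. *)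

theory Defs
  imports "HOL-Complex_Analysis.Complex_Analysis"
begin

definition abel_universal :: "(complex \<Rightarrow> complex) \<Rightarrow> bool" where
  "abel_universal f \<longleftrightarrow> f holomorphic_on ball 0 1 \<and>
     (\<forall>\<epsilon>>0. \<forall>K \<phi>. compact K \<and> K \<subseteq> sphere 0 1 \<and> K \<noteq> sphere 0 1 \<and> continuous_on K \<phi> \<longrightarrow>
        (\<exists>r. 0 \<le> r \<and> r < 1 \<and> (\<forall>z\<in>K. cmod (f (of_real r * z) - \<phi> z) \<le> \<epsilon>)))"

definition hadamard_gaps :: "(nat \<Rightarrow> complex) \<Rightarrow> bool" where
  "hadamard_gaps a \<longleftrightarrow> conv_radius a = 1 \<and>
     (\<exists>n :: nat \<Rightarrow> nat. \<exists>q :: real. q > 1 \<and> (\<forall>k. real (n (Suc k)) \<ge> q * real (n k)) \<and>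
        (\<forall>j. j \<notin> range n \<longrightarrow> a j = 0))"

end

theory Submission
  imports Defs
begin

(* If f were Abel universal, approximating the constant a 0 - 1 on an arc
   {cis t. |t| <= pi - delta} and truncating the power series would produce trigonometric
   polynomials P t = 1 + (sum of c m * cis (m t)), with frequencies in {0} and the gap
   sequence, of modulus at most 1/2 on the arc, so that the integral of |P|^2 over the arc
   is at most (pi - delta) / 2.  On the other hand, the Gram matrix of the exponentials on
   the arc has entries 2 sin ((m - l) (pi - delta)) / (m - l), bounded by
   2 sqrt (delta / |m - l|), and |m - l| grows geometrically along a Hadamard lacunary
   sequence; for small delta the matrix is therefore diagonally dominant, which gives the
   Ingham-type inequality: the integral is at least (pi - delta) times the sum of |c m|^2,
   hence at least pi - delta. *)

definition cis_integral :: "real \<Rightarrow> real \<Rightarrow> real" where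
  "cis_integral a d = (if d = 0 then 2 * a else 2 * sin (d * a) / d)"

lemma has_integral_cis:
  assumes "0 \<le> a"
  shows "((\<lambda>t. cis (d * t)) has_integral complex_of_real (cis_integral a d)) {-a..a}"
proof (cases "d = 0")
  case True
  then show ?thesis
    using has_integral_const_real[of "1::complex" "-a" a] assms
    by (simp add: cis_integral_def scaleR_conv_of_real)
next
  case False
  let ?F = "\<lambda>t. cis (d * t) / (\<i> * of_real d)"
  have "((\<lambda>t. cis (d * t)) has_integral (?F a - ?F (-a))) {-a..a}"
  proof (rule fundamental_theorem_of_calculus)
    show "(?F has_vector_derivative cis (d * t)) (at t within {-a..a})" for t
      using False unfolding has_vector_derivative_def
      by (auto intro!: derivative_eq_intros simp: field_simps scaleR_conv_of_real)
  qed (use assms in auto)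
  moreover have "?F a - ?F (-a) = complex_of_real (cis_integral a d)"
    using False by (simp add: cis_integral_def cis.ctr complex_eq_iff field_simps Complex_eq)
  ultimately show ?thesis by simp
qed

lemma cis_integral_minus [simp]: "cis_integral a (- d) = cis_integral a d"
  by (simp add: cis_integral_def)

lemma has_integral_norm_trig_poly_square:
  fixes c :: "nat \<Rightarrow> complex"
  assumes "finite F" "0 \<le> a"
  shows "((\<lambda>t. (cmod (\<Sum>m\<in>F. c m * cis (real m * t)))\<^sup>2) has_integral
           (\<Sum>m\<in>F. \<Sum>l\<in>F. Re (c m * cnj (c l)) * cis_integral a (real m - real l))) {-a..a}"
proof -
  let ?P = "\<lambda>t. \<Sum>m\<in>F. c m * cis (real m * t)"
  let ?E = "\<lambda>t. \<Sum>m\<in>F. \<Sum>l\<in>F. c m * cnj (c l) * cis ((real m - real l) * t)"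
  have "(?E has_integral (\<Sum>m\<in>F. \<Sum>l\<in>F. c m * cnj (c l) * of_real (cis_integral a (real m - real l)))) {-a..a}"
    by (intro has_integral_sum has_integral_mult_right has_integral_cis assms)
  from has_integral_linear[OF this bounded_linear_Re]
  have "((\<lambda>t. Re (?E t)) has_integral
          (\<Sum>m\<in>F. \<Sum>l\<in>F. Re (c m * cnj (c l)) * cis_integral a (real m - real l))) {-a..a}"
    by (simp add: o_def Re_sum)
  moreover have "Re (?E t) = (cmod (?P t))\<^sup>2" for t
  proof -
    have cis_diff: "cis ((x - y) * t) = cis (x * t) * cnj (cis (y * t))" for x y
      by (simp add: cis_cnj cis_mult algebra_simps)
    have "?P t * cnj (?P t) = ?E t"
      by (simp add: cnj_sum sum_product cis_diff) (simp add: mult_ac)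
    then show ?thesis
      by (metis Re_complex_of_real complex_norm_square)
  qed
  ultimately show ?thesis by simp
qed

lemma integral_norm_trig_poly_square_le:
  fixes c :: "nat \<Rightarrow> complex"
  assumes "0 \<le> a" "\<And>t. t \<in> {-a..a} \<Longrightarrow> cmod (\<Sum>m\<in>F. c m * cis (real m * t)) \<le> M"
  shows "integral {-a..a} (\<lambda>t. (cmod (\<Sum>m\<in>F. c m * cis (real m * t)))\<^sup>2) \<le> 2 * a * M\<^sup>2"
proof -
  have "integral {-a..a} (\<lambda>t. (cmod (\<Sum>m\<in>F. c m * cis (real m * t)))\<^sup>2)
          \<le> integral {-a..a} (\<lambda>t. M\<^sup>2)"
  proof (intro integral_le integrable_continuous_interval continuous_intros)
    show "(cmod (\<Sum>m\<in>F. c m * cis (real m * t)))\<^sup>2 \<le> M\<^sup>2" if "t \<in> {-a..a}" for t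
      using assms(2)[OF that] by (intro power_mono) auto
  qed
  then show ?thesis
    using \<open>0 \<le> a\<close> by simp
qed

lemma abs_Re_mult_cnj_le: "\<bar>Re (z * cnj w)\<bar> \<le> ((cmod z)\<^sup>2 + (cmod w)\<^sup>2) / 2"
proof -
  have "\<bar>Re (z * cnj w)\<bar> \<le> cmod z * cmod w"
    using abs_Re_le_cmod[of "z * cnj w"] by (simp add: norm_mult)
  also have "\<dots> \<le> ((cmod z)\<^sup>2 + (cmod w)\<^sup>2) / 2"
    using sum_squares_bound[of "cmod z" "cmod w"] by simp
  finally show ?thesis .
qed

lemma sum_sum_symmetric_average:
  fixes x :: "'a \<Rightarrow> real"
  assumes "\<And>m l. K l m = K m l"
  shows "(\<Sum>m\<in>F. \<Sum>l\<in>F. (x m + x l) / 2 * K m l) = (\<Sum>m\<in>F. \<Sum>l\<in>F. x m * K m l)"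
proof -
  have "(\<Sum>m\<in>F. \<Sum>l\<in>F. x l * K m l) = (\<Sum>l\<in>F. \<Sum>m\<in>F. x l * K l m)"
    by (subst sum.swap) (intro sum.cong refl arg_cong2[where f=times] assms)
  then show ?thesis
    by (simp add: add_divide_distrib distrib_right sum.distrib flip: sum_divide_distrib)
qed

lemma diagonally_dominant_quadratic_form_ge:
  fixes c :: "'a \<Rightarrow> complex" and K :: "'a \<Rightarrow> 'a \<Rightarrow> real"
  assumes "finite F"
    and sym: "\<And>m l. K l m = K m l"
    and diag: "\<And>m. m \<in> F \<Longrightarrow> K m m = A"
    and row: "\<And>m. m \<in> F \<Longrightarrow> (\<Sum>l\<in>F-{m}. \<bar>K m l\<bar>) \<le> B"
  shows "(A - B) * (\<Sum>m\<in>F. (cmod (c m))\<^sup>2) \<le> (\<Sum>m\<in>F. \<Sum>l\<in>F. Re (c m * cnj (c l)) * K m l)"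
proof -
  define K' where "K' m l = (if l = m then 0 else \<bar>K m l\<bar>)" for m l
  have K'_sym: "K' l m = K' m l" for m l
    unfolding K'_def using sym[of m l] by simp
  have row': "(\<Sum>l\<in>F. K' m l) \<le> B" if "m \<in> F" for m
    using row[OF that] \<open>finite F\<close> by (simp add: K'_def sum.If_cases Diff_eq)
  have entry: "- (((cmod (c m))\<^sup>2 + (cmod (c l))\<^sup>2) / 2 * K' m l)
      \<le> Re (c m * cnj (c l)) * K m l - (if l = m then A * (cmod (c m))\<^sup>2 else 0)"
    if "m \<in> F" for m l
  proof (cases "l = m")
    case True
    then show ?thesis using diag[OF that] by (simp add: K'_def complex_mult_cnj cmod_def)
  next
    case False
    have "\<bar>Re (c m * cnj (c l)) * K m l\<bar> \<le> ((cmod (c m))\<^sup>2 + (cmod (c l))\<^sup>2) / 2 * \<bar>K m l\<bar>"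
      unfolding abs_mult by (rule mult_right_mono[OF abs_Re_mult_cnj_le]) simp
    then show ?thesis
      using False by (simp only: K'_def if_False diff_0_right)
  qed
  have "- B * (\<Sum>m\<in>F. (cmod (c m))\<^sup>2) \<le> - (\<Sum>m\<in>F. \<Sum>l\<in>F. (cmod (c m))\<^sup>2 * K' m l)"
  proof -
    have "(\<Sum>m\<in>F. \<Sum>l\<in>F. (cmod (c m))\<^sup>2 * K' m l)
        = (\<Sum>m\<in>F. (cmod (c m))\<^sup>2 * (\<Sum>l\<in>F. K' m l))"
      by (simp add: sum_distrib_left)
    also have "\<dots> \<le> (\<Sum>m\<in>F. (cmod (c m))\<^sup>2 * B)"
      by (intro sum_mono mult_left_mono row') auto
    also have "\<dots> = B * (\<Sum>m\<in>F. (cmod (c m))\<^sup>2)"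
      by (simp add: sum_distrib_left mult.commute)
    finally show ?thesis
      by simp
  qed
  also have "\<dots> = (\<Sum>m\<in>F. \<Sum>l\<in>F. - (((cmod (c m))\<^sup>2 + (cmod (c l))\<^sup>2) / 2 * K' m l))"
    using sum_sum_symmetric_average[where K = K' and x = "\<lambda>m. (cmod (c m))\<^sup>2", OF K'_sym]
    by (simp add: sum_negf)
  also have "\<dots> \<le> (\<Sum>m\<in>F. \<Sum>l\<in>F.
      Re (c m * cnj (c l)) * K m l - (if l = m then A * (cmod (c m))\<^sup>2 else 0))"
    by (intro sum_mono entry)
  also have "\<dots> = (\<Sum>m\<in>F. \<Sum>l\<in>F. Re (c m * cnj (c l)) * K m l) - A * (\<Sum>m\<in>F. (cmod (c m))\<^sup>2)"
    using \<open>finite F\<close> by (simp add: sum_subtractf sum.delta sum_distrib_left)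
  finally show ?thesis by (simp add: algebra_simps)
qed

lemma abs_cis_integral_le_inverse:
  assumes "d \<noteq> 0"
  shows "\<bar>cis_integral a d\<bar> \<le> 2 / \<bar>d\<bar>"
  using assms abs_sin_le_one[of "d * a"]
  by (auto simp: cis_integral_def abs_mult abs_divide divide_right_mono)

lemma abs_cis_integral_pi_minus_le:
  assumes "d \<in> \<int>" "d \<noteq> 0" "0 \<le> \<delta>"
  shows "\<bar>cis_integral (pi - \<delta>) d\<bar> \<le> 2 * \<delta>"
proof -
  obtain k where k: "d = of_int k" using assms(1) by (rule Ints_cases)
  have "\<bar>sin (d * (pi - \<delta>))\<bar> = \<bar>sin (d * \<delta>)\<bar>"
    unfolding k right_diff_distrib sin_diff by (simp add: mult.commute abs_mult)
  also have "\<dots> \<le> \<bar>d\<bar> * \<delta>"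
    using abs_sin_x_le_abs_x[of "d * \<delta>"] assms(3) by (simp add: abs_mult)
  finally show ?thesis
    using assms(2) by (simp add: cis_integral_def abs_mult abs_divide field_simps)
qed

lemma abs_cis_integral_pi_minus_le_sqrt:
  assumes "d \<in> \<int>" "d \<noteq> 0" "0 \<le> \<delta>"
  shows "\<bar>cis_integral (pi - \<delta>) d\<bar> \<le> 2 * sqrt (\<delta> / \<bar>d\<bar>)"
proof (rule power2_le_imp_le)
  have "\<bar>cis_integral (pi - \<delta>) d\<bar>\<^sup>2 \<le> (2 * \<delta>) * (2 / \<bar>d\<bar>)"
    unfolding power2_eq_square
    using abs_cis_integral_pi_minus_le[OF assms] abs_cis_integral_le_inverse[OF assms(2)]
    by (intro mult_mono) auto
  also have "\<dots> = (2 * sqrt (\<delta> / \<bar>d\<bar>))\<^sup>2"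
    using assms by (simp add: power_mult_distrib)
  finally show "\<bar>cis_integral (pi - \<delta>) d\<bar>\<^sup>2 \<le> (2 * sqrt (\<delta> / \<bar>d\<bar>))\<^sup>2" .
qed (use assms in simp)

definition lacunary_set :: "real \<Rightarrow> nat set \<Rightarrow> bool" where
  "lacunary_set q S \<longleftrightarrow> (\<forall>u\<in>S. \<forall>v\<in>S. u < v \<longrightarrow> q * real u \<le> real v)"

lemma lacunary_set_range:
  assumes "1 \<le> q" and growth: "\<And>k. q * real (n k) \<le> real (n (Suc k))"
  shows "lacunary_set q (range n)"
proof -
  have "mono n"
  proof (rule incseq_SucI)
    show "n k \<le> n (Suc k)" for k
      using growth[of k] mult_right_mono[OF \<open>1 \<le> q\<close>, of "real (n k)"] by simp
  qed
  have "q * real (n i) \<le> real (n j)" if "n i < n j" for i j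
  proof -
    have "i < j"
      using that \<open>mono n\<close> by (metis leI monoD not_le)
    then have "n (Suc i) \<le> n j"
      using \<open>mono n\<close> by (simp add: monoD)
    then show ?thesis
      using growth[of i] by simp
  qed
  then show ?thesis
    unfolding lacunary_set_def by blast
qed

lemma lacunary_set_gap:
  assumes "lacunary_set q S" "0 < q" "u \<in> insert 0 S" "v \<in> insert 0 S" "u < v"
  shows "(1 - 1 / q) * real v \<le> real v - real u"
proof (cases "u = 0")
  case True
  then show ?thesis using \<open>0 < q\<close> by (simp add: algebra_simps)
next
  case False
  then have "q * real u \<le> real v"
    using assms unfolding lacunary_set_def by auto
  then show ?thesis
    using \<open>0 < q\<close> by (simp add: field_simps)
qed

lemma lacunary_sum_inverse_sqrt_le:
  assumes "lacunary_set q S" "1 < q" "finite F" "F \<subseteq> S"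
    and "0 < \<mu>" "\<And>x. x \<in> F \<Longrightarrow> \<mu> \<le> real x"
  shows "(\<Sum>x\<in>F. 1 / sqrt (real x)) \<le> 1 / sqrt \<mu> / (1 - 1 / sqrt q)"
  using assms(3-6)
proof (induction F arbitrary: \<mu> rule: finite_remove_induct)
  case empty
  then show ?case
    using \<open>1 < q\<close> by (simp add: field_simps)
next
  case (remove F)
  define m where "m = Min F"
  have "m \<in> F" "\<And>x. x \<in> F \<Longrightarrow> m \<le> x"
    using remove.hyps by (simp_all add: m_def)
  have "\<mu> \<le> real m" "0 < real m"
    using remove.prems \<open>m \<in> F\<close> by force+
  have IH: "(\<Sum>x\<in>F - {m}. 1 / sqrt (real x)) \<le> 1 / sqrt (q * real m) / (1 - 1 / sqrt q)"
  proof (rule remove.IH)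
    show "q * real m \<le> real x" if "x \<in> F - {m}" for x
      using that \<open>m \<in> F\<close> \<open>\<And>x. x \<in> F \<Longrightarrow> m \<le> x\<close> remove.prems(1) assms(1)
      unfolding lacunary_set_def by (metis DiffE insertI1 le_neq_implies_less subsetD)
  qed (use \<open>m \<in> F\<close> remove.prems \<open>0 < real m\<close> \<open>1 < q\<close> in auto)
  have "(\<Sum>x\<in>F. 1 / sqrt (real x)) = 1 / sqrt (real m) + (\<Sum>x\<in>F - {m}. 1 / sqrt (real x))"
    using \<open>m \<in> F\<close> remove.hyps by (simp add: sum.remove)
  also have "\<dots> \<le> 1 / sqrt (real m) + 1 / sqrt (q * real m) / (1 - 1 / sqrt q)"
    using IH by simp
  also have "\<dots> = 1 / sqrt (real m) / (1 - 1 / sqrt q)"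
    using \<open>1 < q\<close> \<open>0 < real m\<close> by (simp add: real_sqrt_mult field_simps)
  also have "\<dots> \<le> 1 / sqrt \<mu> / (1 - 1 / sqrt q)"
    using \<open>1 < q\<close> \<open>\<mu> \<le> real m\<close> remove.prems
    by (intro divide_right_mono) (auto simp: frac_le)
  finally show ?case .
qed

lemma lacunary_set_dist_ge:
  assumes "lacunary_set q S" "1 \<le> q" "l \<in> insert 0 S" "m \<in> insert 0 S" "l \<noteq> m"
  shows "(1 - 1 / q) * max 1 (real l) \<le> \<bar>real m - real l\<bar>"
proof -
  have "(1 - 1 / q) * real (max m l) \<le> \<bar>real m - real l\<bar>"
    using assms lacunary_set_gap[OF assms(1), of m l] lacunary_set_gap[OF assms(1), of l m]
    by (cases "l < m") (auto simp: max_def)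
  moreover have "max 1 (real l) \<le> real (max m l)"
    using \<open>l \<noteq> m\<close> by auto
  moreover have "0 \<le> 1 - 1 / q"
    using \<open>1 \<le> q\<close> by simp
  ultimately show ?thesis
    by (meson mult_left_mono order_trans)
qed

lemma lacunary_sum_inverse_sqrt_dist_le:
  assumes "lacunary_set q S" "1 < q" "finite F" "F \<subseteq> insert 0 S" "m \<in> F"
  shows "(\<Sum>l\<in>F - {m}. 1 / sqrt \<bar>real m - real l\<bar>) \<le> (1 + 1 / (1 - 1 / sqrt q)) / sqrt (1 - 1 / q)"
proof -
  let ?g = "\<lambda>l. 1 / sqrt (max 1 (real l))"
  have cq: "0 < 1 - 1 / q"
    using \<open>1 < q\<close> by simp
  have "(\<Sum>l\<in>F - {m}. 1 / sqrt \<bar>real m - real l\<bar>) \<le> (\<Sum>l\<in>F - {m}. ?g l / sqrt (1 - 1 / q))"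
  proof (rule sum_mono)
    fix l assume "l \<in> F - {m}"
    then have "sqrt (1 - 1 / q) * sqrt (max 1 (real l)) \<le> sqrt \<bar>real m - real l\<bar>"
      using lacunary_set_dist_ge[OF assms(1), of l m] assms by (auto simp flip: real_sqrt_mult)
    then show "1 / sqrt \<bar>real m - real l\<bar> \<le> ?g l / sqrt (1 - 1 / q)"
      using cq by (simp add: divide_divide_eq_left) (rule frac_le, auto simp: mult.commute)
  qed
  also have "\<dots> \<le> (\<Sum>l\<in>insert 0 (F - {0}). ?g l) / sqrt (1 - 1 / q)"
    unfolding sum_divide_distrib[symmetric] using assms(3) cq
    by (intro divide_right_mono sum_mono2) auto
  also have "(\<Sum>l\<in>insert 0 (F - {0}). ?g l) = 1 + (\<Sum>l\<in>F - {0}. 1 / sqrt (real l))"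
    using assms(3) by (subst sum.insert) (auto intro!: sum.cong)
  also have "\<dots> \<le> 1 + 1 / (1 - 1 / sqrt q)"
    using lacunary_sum_inverse_sqrt_le[OF assms(1,2), of "F - {0}" 1] assms by force
  finally show ?thesis
    using cq by (simp add: divide_right_mono)
qed

lemma lacunary_cis_integral_row_sum_le:
  assumes "lacunary_set q S" "1 < q" "finite F" "F \<subseteq> insert 0 S" "m \<in> F" "0 \<le> \<delta>"
  shows "(\<Sum>l\<in>F - {m}. \<bar>cis_integral (pi - \<delta>) (real m - real l)\<bar>)
           \<le> 2 * sqrt \<delta> * ((1 + 1 / (1 - 1 / sqrt q)) / sqrt (1 - 1 / q))"
proof -
  have "(\<Sum>l\<in>F - {m}. \<bar>cis_integral (pi - \<delta>) (real m - real l)\<bar>)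
          \<le> (\<Sum>l\<in>F - {m}. 2 * sqrt \<delta> * (1 / sqrt \<bar>real m - real l\<bar>))"
    using abs_cis_integral_pi_minus_le_sqrt \<open>0 \<le> \<delta>\<close>
    by (intro sum_mono) (auto simp: real_sqrt_divide)
  also have "\<dots> \<le> 2 * sqrt \<delta> * ((1 + 1 / (1 - 1 / sqrt q)) / sqrt (1 - 1 / q))"
    unfolding sum_distrib_left[symmetric]
    using lacunary_sum_inverse_sqrt_dist_le[OF assms(1-5)] \<open>0 \<le> \<delta>\<close>
    by (intro mult_left_mono) auto
  finally show ?thesis .
qed

lemma lacunary_Ingham_inequality:
  assumes "lacunary_set q S" "1 < q"
  obtains \<delta> where "0 < \<delta>" "\<delta> \<le> 1 / 4"
    "\<And>F c. finite F \<Longrightarrow> F \<subseteq> insert 0 S \<Longrightarrow>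
       (pi - \<delta>) * (\<Sum>m\<in>F. (cmod (c m))\<^sup>2)
         \<le> integral {-(pi - \<delta>)..pi - \<delta>} (\<lambda>t. (cmod (\<Sum>m\<in>F. c m * cis (real m * t)))\<^sup>2)"
proof -
  define C where "C = (1 + 1 / (1 - 1 / sqrt q)) / sqrt (1 - 1 / q)"
  define \<delta> where "\<delta> = 1 / (4 * (1 + C)\<^sup>2)"
  have "0 \<le> C"
    using \<open>1 < q\<close> by (simp add: C_def)
  have sqrt_\<delta>: "sqrt \<delta> = 1 / (2 * (1 + C))"
    using \<open>0 \<le> C\<close> by (simp add: \<delta>_def real_sqrt_divide real_sqrt_mult)
  have "0 < \<delta>" "\<delta> \<le> 1 / 4"
    using \<open>0 \<le> C\<close> by (auto simp: \<delta>_def one_le_power)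
  have "2 * sqrt \<delta> * C \<le> 1"
    using \<open>0 \<le> C\<close> by (simp add: sqrt_\<delta>)
  let ?\<alpha> = "pi - \<delta>"
  have "?\<alpha> * (\<Sum>m\<in>F. (cmod (c m))\<^sup>2)
          \<le> integral {-?\<alpha>..?\<alpha>} (\<lambda>t. (cmod (\<Sum>m\<in>F. c m * cis (real m * t)))\<^sup>2)"
    if F: "finite F" "F \<subseteq> insert 0 S" for F and c :: "nat \<Rightarrow> complex"
  proof -
    have row: "(\<Sum>l\<in>F - {m}. \<bar>cis_integral ?\<alpha> (real m - real l)\<bar>) \<le> 1" if "m \<in> F" for m
      using lacunary_cis_integral_row_sum_le[OF assms F that, of \<delta>] \<open>0 < \<delta>\<close>
        \<open>2 * sqrt \<delta> * C \<le> 1\<close>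
      unfolding C_def by linarith
    have "?\<alpha> * (\<Sum>m\<in>F. (cmod (c m))\<^sup>2) \<le> (2 * ?\<alpha> - 1) * (\<Sum>m\<in>F. (cmod (c m))\<^sup>2)"
      using \<open>\<delta> \<le> 1 / 4\<close> pi_gt3 by (intro mult_right_mono sum_nonneg) auto
    also have "\<dots> \<le> (\<Sum>m\<in>F. \<Sum>l\<in>F. Re (c m * cnj (c l)) * cis_integral ?\<alpha> (real m - real l))"
    proof (rule diagonally_dominant_quadratic_form_ge)
      show "cis_integral ?\<alpha> (real l - real m) = cis_integral ?\<alpha> (real m - real l)" for m l
        by (metis cis_integral_minus minus_diff_eq)
    qed (use F row in \<open>simp_all add: cis_integral_def\<close>)
    also have "\<dots> = integral {-?\<alpha>..?\<alpha>} (\<lambda>t. (cmod (\<Sum>m\<in>F. c m * cis (real m * t)))\<^sup>2)"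
      using has_integral_norm_trig_poly_square[OF F(1), of ?\<alpha> c] \<open>\<delta> \<le> 1 / 4\<close> pi_gt3
      by (simp add: integral_unique)
    finally show ?thesis .
  qed
  with \<open>0 < \<delta>\<close> \<open>\<delta> \<le> 1 / 4\<close> show ?thesis
    using that by blast
qed

lemma hadamard_gaps_imp_lacunary_support:
  assumes "hadamard_gaps a"
  obtains q S where "1 < q" "lacunary_set q S" "{k. a k \<noteq> 0} \<subseteq> S"
proof -
  obtain n :: "nat \<Rightarrow> nat" and q :: real where "1 < q"
    and growth: "\<And>k. q * real (n k) \<le> real (n (Suc k))" and gaps: "\<And>j. j \<notin> range n \<Longrightarrow> a j = 0"
    using assms unfolding hadamard_gaps_def by blast
  have "lacunary_set q (range n)"
    using \<open>1 < q\<close> growth by (intro lacunary_set_range) auto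
  moreover have "{k. a k \<noteq> 0} \<subseteq> range n"
    using gaps by blast
  ultimately show ?thesis
    using \<open>1 < q\<close> that by blast
qed

lemma cis_arc_ne_sphere:
  assumes "\<alpha> < pi"
  shows "cis ` {-\<alpha>..\<alpha>} \<noteq> sphere 0 1"
proof
  assume "cis ` {-\<alpha>..\<alpha>} = sphere 0 1"
  then obtain t where t: "\<bar>t\<bar> \<le> \<alpha>" "cis t = -1"
    by (metis (no_types, lifting) abs_le_iff atLeastAtMost_iff imageE minus_le_iff
        mem_sphere_0 norm_minus_cancel norm_one)
  have "cos pi < cos \<bar>t\<bar>"
    using t(1) assms by (intro cos_monotone_0_pi) auto
  moreover have "cos t = -1"
    using arg_cong[OF t(2), of Re] by simp
  ultimately show False
    by simp
qed

lemma powser_partial_sums_uniformly_close: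
  fixes a :: "nat \<Rightarrow> complex"
  assumes "ereal r < conv_radius a" "0 < \<epsilon>"
  obtains N where "\<And>z. z \<in> cball 0 r \<Longrightarrow> cmod ((\<Sum>i. a i * z ^ i) - (\<Sum>i\<le>N. a i * z ^ i)) < \<epsilon>"
proof -
  obtain N where "\<And>z. z \<in> cball 0 r \<Longrightarrow> dist (\<Sum>i<Suc N. a i * z ^ i) (\<Sum>i. a i * z ^ i) < \<epsilon>"
    using powser_uniform_limit[OF assms(1), of 0] \<open>0 < \<epsilon>\<close>
    unfolding uniform_limit_sequentially_iff by (metis diff_zero le_SucI order_refl)
  then show ?thesis
    using that[of N] by (simp add: dist_norm norm_minus_commute lessThan_Suc_atMost)
qed

lemma abel_universal_imp_small_trig_poly:
  fixes f :: "complex \<Rightarrow> complex" and a :: "nat \<Rightarrow> complex"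
  assumes f: "\<forall>z\<in>ball 0 1. f z = (\<Sum>k. a k * z ^ k)" and "1 \<le> conv_radius a"
    and "abel_universal f" and "\<alpha> < pi"
  obtains F c where "finite F" "0 \<in> F" "F \<subseteq> insert 0 {k. a k \<noteq> 0}" "c 0 = 1"
    "\<And>t. t \<in> {-\<alpha>..\<alpha>} \<Longrightarrow> cmod (\<Sum>m\<in>F. c m * cis (real m * t)) \<le> 1 / 2"
proof -
  have "compact (cis ` {-\<alpha>..\<alpha>})"
    by (intro compact_continuous_image continuous_intros) auto
  moreover have "cis ` {-\<alpha>..\<alpha>} \<subseteq> sphere 0 1"
    by auto
  \<comment> \<open>Approximate the constant a 0 - 1: subtracting it from the series turns the constant term into 1.\<close>
  ultimately obtain r where r: "0 \<le> r" "r < 1"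
    and close: "\<forall>z\<in>cis ` {-\<alpha>..\<alpha>}. cmod (f (of_real r * z) - (a 0 - 1)) \<le> 1 / 4"
    using \<open>abel_universal f\<close> cis_arc_ne_sphere[OF \<open>\<alpha> < pi\<close>]
    unfolding abel_universal_def
    by (metis continuous_on_const divide_pos_pos zero_less_numeral zero_less_one)
  have "ereal r < conv_radius a"
    using \<open>r < 1\<close> \<open>1 \<le> conv_radius a\<close> ereal_less(3)[of r] order_less_le_trans by blast
  then obtain N where N: "\<And>z. z \<in> cball 0 r \<Longrightarrow> cmod ((\<Sum>i. a i * z ^ i) - (\<Sum>i\<le>N. a i * z ^ i)) < 1 / 4"
    by (rule powser_partial_sums_uniformly_close[where \<epsilon> = "1 / 4"]) (auto intro: that)
  define F where "F = {k. k \<le> N \<and> (k = 0 \<or> a k \<noteq> 0)}"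
  define c where "c k = (if k = 0 then 1 else a k * of_real r ^ k)" for k
  show ?thesis
  proof (rule that[of F c])
    fix t assume t: "t \<in> {-\<alpha>..\<alpha>}"
    define z where "z = of_real r * cis t"
    have "z \<in> ball 0 1" "z \<in> cball 0 r"
      using r by (simp_all add: z_def norm_mult)
    have z_power: "z ^ m = of_real r ^ m * cis (real m * t)" for m
      unfolding z_def power_mult_distrib Complex.DeMoivre ..
    have "(\<Sum>m\<in>F. c m * cis (real m * t)) = (\<Sum>m\<le>N. c m * cis (real m * t))"
      by (rule sum.mono_neutral_left) (auto simp: F_def c_def)
    also have "\<dots> = (\<Sum>m\<le>N. a m * z ^ m + (if m = 0 then 1 - a 0 else 0))"
      using z_power by (intro sum.cong) (auto simp: c_def)
    also have "\<dots> = (f z - (a 0 - 1)) - ((\<Sum>i. a i * z ^ i) - (\<Sum>i\<le>N. a i * z ^ i))"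
      using f \<open>z \<in> ball 0 1\<close> by (simp add: sum.distrib)
    finally have "cmod (\<Sum>m\<in>F. c m * cis (real m * t))
        \<le> cmod (f z - (a 0 - 1)) + cmod ((\<Sum>i. a i * z ^ i) - (\<Sum>i\<le>N. a i * z ^ i))"
      by (metis norm_triangle_ineq4)
    moreover have "cmod (f z - (a 0 - 1)) \<le> 1 / 4"
      using close t by (simp add: z_def)
    ultimately show "cmod (\<Sum>m\<in>F. c m * cis (real m * t)) \<le> 1 / 2"
      using N[OF \<open>z \<in> cball 0 r\<close>] by linarith
  qed (auto simp: F_def c_def)
qed

theorem corollary4p4:
  fixes f :: "complex \<Rightarrow> complex" and a :: "nat \<Rightarrow> complex"
  assumes "\<forall>z\<in>ball 0 1. f z = (\<Sum>k. a k * z ^ k)"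
    and "hadamard_gaps a"
  shows "\<not> abel_universal f"
proof
  assume "abel_universal f"
  have "conv_radius a = 1"
    using assms(2) by (simp add: hadamard_gaps_def)
  obtain q S where "1 < q" "lacunary_set q S" and support: "{k. a k \<noteq> 0} \<subseteq> S"
    using assms(2) by (rule hadamard_gaps_imp_lacunary_support)
  obtain \<delta> where "0 < \<delta>" "\<delta> \<le> 1 / 4" and Ingham:
    "\<And>F c. finite F \<Longrightarrow> F \<subseteq> insert 0 S \<Longrightarrow>
       (pi - \<delta>) * (\<Sum>m\<in>F. (cmod (c m))\<^sup>2)
         \<le> integral {-(pi - \<delta>)..pi - \<delta>} (\<lambda>t. (cmod (\<Sum>m\<in>F. c m * cis (real m * t)))\<^sup>2)"
    using \<open>lacunary_set q S\<close> \<open>1 < q\<close> by (rule lacunary_Ingham_inequality) (rule that)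
  define \<alpha> where "\<alpha> = pi - \<delta>"
  obtain F c where F: "finite F" "0 \<in> F" "F \<subseteq> insert 0 {k. a k \<noteq> 0}" "c 0 = 1"
    and small: "\<And>t. t \<in> {-\<alpha>..\<alpha>} \<Longrightarrow> cmod (\<Sum>m\<in>F. c m * cis (real m * t)) \<le> 1 / 2"
    by (rule abel_universal_imp_small_trig_poly[OF assms(1) _ \<open>abel_universal f\<close>, of \<alpha>])
      (use \<open>conv_radius a = 1\<close> \<open>0 < \<delta>\<close> in \<open>simp_all add: \<alpha>_def\<close>)
  have "1 \<le> (\<Sum>m\<in>F. (cmod (c m))\<^sup>2)"
    using member_le_sum[of 0 F "\<lambda>m. (cmod (c m))\<^sup>2"] F by simp
  then have "\<alpha> \<le> \<alpha> * (\<Sum>m\<in>F. (cmod (c m))\<^sup>2)"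
    using \<open>\<delta> \<le> 1 / 4\<close> pi_gt3 by (simp add: \<alpha>_def)
  also have "\<dots> \<le> integral {-\<alpha>..\<alpha>} (\<lambda>t. (cmod (\<Sum>m\<in>F. c m * cis (real m * t)))\<^sup>2)"
    unfolding \<alpha>_def using F support by (intro Ingham) auto
  also have "\<dots> \<le> 2 * \<alpha> * (1 / 2)\<^sup>2"
    using \<open>\<delta> \<le> 1 / 4\<close> pi_gt3 small by (intro integral_norm_trig_poly_square_le) (auto simp: \<alpha>_def)
  finally show False
    using \<open>\<delta> \<le> 1 / 4\<close> pi_gt3 by (simp add: \<alpha>_def power2_eq_square)
qed

end
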